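(* Let $p$ be a prime, let $n\geq 3$, and let $L$ be a nilpotent Lie ring of order $p^{n}$ and nilpotency class $n-1$. Then $pL\leq L^{n-1}$, where $pL=\{pa\mid a\in L\}$.
   Context: A Lie ring is an abelian group with a bilinear, alternating product (written $ab$) satisfying the Jacobi identity; its order is the order of the underlying additive group. The lower central series is $L^{1}=L$, $L^{2}=\langle ab\mid a,b\in L\rangle$ and for $i>2$, $L^{i}=\langle ab\mid a\in L^{i-1},\,b\in L\rangle$ (additive subgroups generated by these products). $L$ has nilpotency class $c$ if $L^{c+1}=\{0\}$ and $L^{c}\neq\{0\}$. *)

theory Defs
  imports Main "HOL-Computational_Algebra.Primes"
begin

definition lie_ring :: "('a::ab_group_add \<Rightarrow> 'a \<Rightarrow> 'a) \<Rightarrow> bool" where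
  "lie_ring br \<longleftrightarrow>
     (\<forall>a b c. br (a + b) c = br a c + br b c) \<and>
     (\<forall>a b c. br a (b + c) = br a b + br a c) \<and>
     (\<forall>a. br a a = 0) \<and>
     (\<forall>a b c. br a (br b c) + br b (br c a) + br c (br a b) = 0)"

inductive_set add_gen :: "'a::ab_group_add set \<Rightarrow> 'a set" for S where
  zero: "0 \<in> add_gen S"
| base: "x \<in> S \<Longrightarrow> x \<in> add_gen S"
| plus: "x \<in> add_gen S \<Longrightarrow> y \<in> add_gen S \<Longrightarrow> x + y \<in> add_gen S"
| neg:  "x \<in> add_gen S \<Longrightarrow> - x \<in> add_gen S"

text \<open>Lower central series: lcs br 1 = L, lcs br (i+1) = generated by products
  a b with a in lcs br i. (Index 0 is unused and set to L.)\<close>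
fun lcs :: "('a::ab_group_add \<Rightarrow> 'a \<Rightarrow> 'a) \<Rightarrow> nat \<Rightarrow> 'a set" where
  "lcs br 0 = UNIV"
| "lcs br (Suc 0) = UNIV"
| "lcs br (Suc (Suc i)) = add_gen {br a b | a b. a \<in> lcs br (Suc i)}"

definition nilpotency_class :: "('a::ab_group_add \<Rightarrow> 'a \<Rightarrow> 'a) \<Rightarrow> nat \<Rightarrow> bool" where
  "nilpotency_class br c \<longleftrightarrow> lcs br (c + 1) = {0} \<and> lcs br c \<noteq> {0}"

fun nat_mult :: "nat \<Rightarrow> 'a::ab_group_add \<Rightarrow> 'a" where
  "nat_mult 0 a = 0"
| "nat_mult (Suc n) a = a + nat_mult n a"

end

theory Submission
  imports Defs "HOL-Algebra.Multiplicative_Group"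
begin

text \<open>By Lagrange every additive subgroup has p-power order, so each proper inclusion of
  subgroups multiplies the order by at least p. The quotient L/L^2 is not cyclic, since
  L = <x> + L^2 would give L^2 = L^3; so the strictly decreasing chain
  L > <x> + L^2 > L^2 > L^3 > ... > L^n = 0 has n + 1 terms and all its indices are p.
  In particular L/L^2 has order p^2 and exponent p, i.e. pL is contained in L^2: if px is not
  in L^2, then <px> + L^2 = <x> + L^2, which forces x into L^2 because p^n x = 0.

  Now suppose pL is contained in L^i with 2 \<le> i < n - 1, but pa is not in L^(i+1). As L^(i+1)
  has index p in L^i, we get L^i = <pa> + L^(i+1), hence [a, L^i] lies in L^(i+2). So
  [pa, c] = [a, pc] lies in L^(i+2) for every c, whence [L^i, L] lies in L^(i+2), i.e.
  L^(i+1) = L^(i+2), contradicting the nilpotency class.\<close>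

definition add_subgroup :: "'a::ab_group_add set \<Rightarrow> bool" where
  "add_subgroup H \<longleftrightarrow> 0 \<in> H \<and> (\<forall>x\<in>H. \<forall>y\<in>H. x + y \<in> H) \<and> (\<forall>x\<in>H. - x \<in> H)"

lemma add_subgroup_UNIV: "add_subgroup UNIV"
  by (simp add: add_subgroup_def)

lemma add_subgroup_add_gen: "add_subgroup (add_gen S)"
  unfolding add_subgroup_def by (auto intro: add_gen.intros)

lemma subset_add_gen: "S \<subseteq> add_gen S"
  by (auto intro: add_gen.base)

lemma add_gen_least:
  assumes "add_subgroup H" "S \<subseteq> H"
  shows "add_gen S \<subseteq> H"
proof
  fix x assume "x \<in> add_gen S"
  then show "x \<in> H"
    by induction (use assms in \<open>auto simp: add_subgroup_def\<close>)
qed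

lemma add_gen_insert_absorb:
  assumes "add_subgroup H" "y \<in> H"
  shows "add_gen (insert y H) = H"
proof
  show "add_gen (insert y H) \<subseteq> H"
    using assms by (intro add_gen_least) auto
qed (auto intro: add_gen.base)

lemma add_subgroup_vimage: "additive f \<Longrightarrow> add_subgroup H \<Longrightarrow> add_subgroup {x. f x \<in> H}"
  unfolding add_subgroup_def by (simp add: additive.add additive.zero additive.minus)

lemma additive_nat_mult: "additive (nat_mult k)"
  by unfold_locales (induction k, simp_all add: algebra_simps)

lemma nat_mult_add_left: "nat_mult (k + m) x = nat_mult k x + nat_mult m x"
  by (induction k) (simp_all add: algebra_simps)

lemma nat_mult_mult: "nat_mult (k * m) x = nat_mult k (nat_mult m x)"
  by (induction k) (simp_all add: nat_mult_add_left)

lemma add_subgroup_nat_mult: "add_subgroup H \<Longrightarrow> x \<in> H \<Longrightarrow> nat_mult k x \<in> H"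
  by (induction k) (auto simp: add_subgroup_def)

text \<open>Iterating the hypothesis puts x into the subgroup generated by H and k^m x.\<close>
lemma mem_if_mem_add_gen_insert_nat_mult:
  assumes H: "add_subgroup H" and x: "x \<in> add_gen (insert (nat_mult k x) H)"
    and km: "nat_mult (k ^ m) x \<in> H"
  shows "x \<in> H"
proof -
  have "x \<in> add_gen (insert (nat_mult (k ^ m) x) H)"
  proof (induction m)
    case 0
    show ?case by (simp add: add_gen.base)
  next
    case (Suc m)
    let ?T = "add_gen (insert (nat_mult (k ^ Suc m) x) H)"
    have "nat_mult k (nat_mult (k ^ m) x) \<in> ?T"
      by (simp add: nat_mult_mult[symmetric] add_gen.base)
    moreover have "nat_mult k h \<in> ?T" if "h \<in> H" for h
      using add_subgroup_nat_mult[OF H that] by (simp add: add_gen.base)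
    ultimately have "insert (nat_mult (k ^ m) x) H \<subseteq> {z. nat_mult k z \<in> ?T}"
      by blast
    then have "add_gen (insert (nat_mult (k ^ m) x) H) \<subseteq> {z. nat_mult k z \<in> ?T}"
      by (intro add_gen_least add_subgroup_vimage additive_nat_mult add_subgroup_add_gen)
    then have "nat_mult k x \<in> ?T"
      using Suc.IH by blast
    then have "add_gen (insert (nat_mult k x) H) \<subseteq> ?T"
      by (intro add_gen_least add_subgroup_add_gen) (simp add: add_gen.base subset_iff)
    then show ?case
      using x by blast
  qed
  then show ?thesis
    using add_gen_insert_absorb[OF H km] by simp
qed

definition additive_group :: "'a::ab_group_add monoid" where
  "additive_group = \<lparr>carrier = UNIV, monoid.mult = (+), one = 0\<rparr>"

lemma group_additive_group: "group additive_group"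
  unfolding additive_group_def
  by (rule groupI) (simp_all add: add.assoc, metis add.left_inverse)

lemma additive_group_pow: "x [^]\<^bsub>additive_group\<^esub> k = nat_mult k x"
  by (induction k) (simp_all add: additive_group_def add.commute)

lemma subgroup_additive_group: "add_subgroup H \<Longrightarrow> subgroup H additive_group"
proof (rule group.subgroupI[OF group_additive_group])
  fix a assume "add_subgroup H" "a \<in> H"
  moreover have "inv\<^bsub>additive_group\<^esub> a = - a"
    by (rule group.inv_equality[OF group_additive_group]) (simp_all add: additive_group_def)
  ultimately show "inv\<^bsub>additive_group\<^esub> a \<in> H"
    by (simp add: add_subgroup_def)
qed (auto simp: add_subgroup_def additive_group_def)

lemma card_add_subgroup_dvd:
  fixes H :: "'a::{ab_group_add, finite} set"
  assumes "add_subgroup H"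
  shows "card H dvd card (UNIV :: 'a set)"
proof -
  have "card H dvd order (additive_group :: 'a monoid)"
    using group.lagrange[OF group_additive_group subgroup_additive_group[OF assms]]
      dvd_triv_right[of "card H" "card (rcosets\<^bsub>additive_group\<^esub> H)"]
    by simp
  then show ?thesis
    by (simp add: order_def additive_group_def)
qed

lemma nat_mult_card_UNIV:
  fixes x :: "'a::{ab_group_add, finite}"
  shows "nat_mult (card (UNIV :: 'a set)) x = 0"
proof -
  have "x [^]\<^bsub>additive_group\<^esub> order (additive_group :: 'a monoid) = \<one>\<^bsub>additive_group\<^esub>"
    by (rule group.pow_order_eq_1[OF group_additive_group]) (simp add: additive_group_def)
  then have "nat_mult (order (additive_group :: 'a monoid)) x = 0"
    unfolding additive_group_pow by (simp add: additive_group_def)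
  then show ?thesis
    by (simp add: order_def additive_group_def)
qed

lemma prime_mult_card_le_card_add_subgroup:
  fixes A B :: "'a::{ab_group_add, finite} set"
  assumes p: "prime p" and card_UNIV: "card (UNIV :: 'a set) = p ^ n"
    and A: "add_subgroup A" and B: "add_subgroup B" and AB: "A \<subset> B"
  shows "p * card A \<le> card B"
proof -
  obtain a where a: "card A = p ^ a"
    using card_add_subgroup_dvd[OF A] divides_primepow_nat[OF p] card_UNIV by auto
  obtain b where b: "card B = p ^ b"
    using card_add_subgroup_dvd[OF B] divides_primepow_nat[OF p] card_UNIV by auto
  have "p ^ a < p ^ b"
    using psubset_card_mono[OF _ AB] a b by simp
  then have "Suc a \<le> b"
    using prime_gt_1_nat[OF p] by (simp add: power_strict_increasing_iff)
  then have "p ^ Suc a \<le> p ^ b"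
    using prime_gt_1_nat[OF p] power_increasing[of "Suc a" b p] by simp
  then show ?thesis
    using a b by simp
qed

lemma intermediate_add_subgroup_eq:
  fixes A B C :: "'a::{ab_group_add, finite} set"
  assumes p: "prime p" and card_UNIV: "card (UNIV :: 'a set) = p ^ n"
    and A: "add_subgroup A" and C: "add_subgroup C"
    and AC: "A \<subset> C" and CB: "C \<subseteq> B" and card_B: "card B \<le> p * card A"
  shows "C = B"
proof -
  have "card B \<le> card C"
    using prime_mult_card_le_card_add_subgroup[OF p card_UNIV A C AC] card_B by simp
  then show ?thesis
    using CB by (simp add: card_seteq)
qed

lemma lcs_Suc: "1 \<le> j \<Longrightarrow> lcs br (Suc j) = add_gen {br a b | a b. a \<in> lcs br j}"
  by (cases j) simp_all

lemma add_subgroup_lcs: "add_subgroup (lcs br j)"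
  by (induction br j rule: lcs.induct) (simp_all add: add_subgroup_UNIV add_subgroup_add_gen)

text \<open>Otherwise the simplifier unfolds terms such as lcs br 2, matching the numeral against
  Suc (Suc i); lcs_Suc is used instead.\<close>
declare lcs.simps(3) [simp del]

lemma bracket_mem_lcs_Suc: "1 \<le> j \<Longrightarrow> a \<in> lcs br j \<Longrightarrow> br a b \<in> lcs br (Suc j)"
  by (auto simp: lcs_Suc intro: add_gen.base)

lemma lcs_Suc_subset:
  assumes "1 \<le> j" "add_subgroup K" "\<And>a b. a \<in> lcs br j \<Longrightarrow> br a b \<in> K"
  shows "lcs br (Suc j) \<subseteq> K"
  unfolding lcs_Suc[OF assms(1)] using assms(2,3) by (intro add_gen_least) auto

lemma lcs_Suc_subset_lcs: "lcs br (Suc j) \<subseteq> lcs br j"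
proof (induction j)
  case (Suc j)
  show ?case
  proof (cases "j = 0")
    case False
    then show ?thesis
      using Suc.IH by (intro lcs_Suc_subset add_subgroup_lcs bracket_mem_lcs_Suc) auto
  qed simp
qed simp

lemma lcs_eq_if_lcs_Suc_eq:
  assumes "1 \<le> j" "lcs br (Suc j) = lcs br j" "j \<le> k"
  shows "lcs br k = lcs br j"
  using assms(3)
proof (induction k rule: dec_induct)
  case (step k)
  then have "lcs br (Suc k) = lcs br (Suc j)"
    using assms(1) by (simp add: lcs_Suc)
  then show ?case
    using assms(2) by simp
qed simp

lemma nilpotency_class_lcs_Suc_psubset:
  assumes "nilpotency_class br c" "1 \<le> j" "j \<le> c"
  shows "lcs br (Suc j) \<subset> lcs br j"
proof -
  have "lcs br (Suc j) \<noteq> lcs br j"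
  proof
    assume "lcs br (Suc j) = lcs br j"
    then have "lcs br c = lcs br (c + 1)"
      using lcs_eq_if_lcs_Suc_eq[OF assms(2)] assms(3) by (metis le_SucI Suc_eq_plus1)
    then show False
      using assms(1) by (simp add: nilpotency_class_def)
  qed
  then show ?thesis
    using lcs_Suc_subset_lcs by blast
qed

context
  fixes br :: "'a::ab_group_add \<Rightarrow> 'a \<Rightarrow> 'a"
  assumes lie_ring: "lie_ring br"
begin

lemma additive_bracket_left: "additive (\<lambda>a. br a c)"
  using lie_ring by unfold_locales (simp add: lie_ring_def)

lemma additive_bracket_right: "additive (br a)"
  using lie_ring by unfold_locales (simp add: lie_ring_def)

lemma bracket_self [simp]: "br a a = 0"
  using lie_ring by (simp add: lie_ring_def)

lemma bracket_antisym: "br a b = - br b a"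
proof -
  have "0 = br (a + b) (a + b)"
    by simp
  also have "\<dots> = br a b + br b a"
    unfolding additive.add[OF additive_bracket_left] additive.add[OF additive_bracket_right]
    by simp
  finally have "br a b + br b a = 0"
    by simp
  then show ?thesis
    by (simp add: eq_neg_iff_add_eq_0)
qed

lemma bracket_nat_mult_left: "br (nat_mult k a) c = nat_mult k (br a c)"
  by (induction k) (simp_all add: additive.add[OF additive_bracket_left]
      additive.zero[OF additive_bracket_left])

lemma bracket_nat_mult_right: "br c (nat_mult k a) = nat_mult k (br c a)"
  by (induction k) (simp_all add: additive.add[OF additive_bracket_right]
      additive.zero[OF additive_bracket_right])

lemma bracket_mem_add_gen:
  assumes K: "add_subgroup K" and ST: "\<And>u v. u \<in> S \<Longrightarrow> v \<in> T \<Longrightarrow> br u v \<in> K"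
    and u: "u \<in> add_gen S" and v: "v \<in> add_gen T"
  shows "br u v \<in> K"
proof -
  have "add_gen T \<subseteq> {v. br u v \<in> K}" if "u \<in> S" for u
    using ST[OF that] by (intro add_gen_least add_subgroup_vimage[OF additive_bracket_right K]) auto
  then have "add_gen S \<subseteq> {u. br u v \<in> K}"
    using v by (intro add_gen_least add_subgroup_vimage[OF additive_bracket_left K]) auto
  then show ?thesis
    using u by blast
qed

lemma lcs_3_eq_lcs_2_if_add_gen_insert_eq_UNIV:
  assumes "add_gen (insert x (lcs br 2)) = UNIV"
  shows "lcs br 3 = lcs br 2"
proof -
  have generators: "br u v \<in> lcs br 3"
    if "u \<in> insert x (lcs br 2)" "v \<in> insert x (lcs br 2)" for u v
  proof -
    have L2: "br w y \<in> lcs br 3" if "w \<in> lcs br 2" for w y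
      using bracket_mem_lcs_Suc[OF _ that] by simp
    from that consider "u = x" "v = x" | "u \<in> lcs br 2" | "v \<in> lcs br 2"
      by blast
    then show ?thesis
    proof cases
      case 1
      then show ?thesis
        using add_subgroup_lcs[of br 3] by (simp add: add_subgroup_def)
    next
      case 3
      then show ?thesis
        using L2 add_subgroup_lcs[of br 3] bracket_antisym[of u v] by (simp add: add_subgroup_def)
    qed (rule L2)
  qed
  have "br u v \<in> lcs br 3" for u v
    using bracket_mem_add_gen[OF add_subgroup_lcs generators] assms by blast
  then have "lcs br (Suc 1) \<subseteq> lcs br 3"
    by (intro lcs_Suc_subset add_subgroup_lcs) simp_all
  moreover have "lcs br (Suc 2) \<subseteq> lcs br 2"
    by (rule lcs_Suc_subset_lcs)
  ultimately show ?thesis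
    by (simp only: numeral_2_eq_2 numeral_3_eq_3 Suc_1 subset_antisym)
qed

end

lemma power_mult_le_of_chain:
  fixes f :: "nat \<Rightarrow> nat"
  assumes "a \<le> b" and step: "\<And>j. a \<le> j \<Longrightarrow> j < b \<Longrightarrow> p * f (Suc j) \<le> f j"
  shows "p ^ (b - a) * f b \<le> f a"
  using assms(1)
proof (induction b rule: dec_induct)
  case (step b)
  have "p ^ (Suc b - a) * f (Suc b) = p ^ (b - a) * (p * f (Suc b))"
    using step.hyps(1) by (simp add: Suc_diff_le)
  also have "\<dots> \<le> p ^ (b - a) * f b"
    using assms(2) step.hyps by simp
  also have "\<dots> \<le> f a"
    by (rule step.IH)
  finally show ?case .
qed simp

locale maximal_class_lie_ring =
  fixes br :: "'a::{ab_group_add, finite} \<Rightarrow> 'a \<Rightarrow> 'a" and p n :: nat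
  assumes prime_p: "prime p" and n_ge_3: "3 \<le> n" and lie_ring: "lie_ring br"
    and card_UNIV: "card (UNIV :: 'a set) = p ^ n"
    and nilpotency_class: "nilpotency_class br (n - 1)"
begin

lemma lcs_Suc_psubset: "1 \<le> j \<Longrightarrow> j < n \<Longrightarrow> lcs br (Suc j) \<subset> lcs br j"
  using nilpotency_class_lcs_Suc_psubset[OF nilpotency_class] by simp

lemma lcs_n: "lcs br n = {0}"
  using nilpotency_class n_ge_3 by (simp add: nilpotency_class_def)

lemma mult_card_le_card:
  fixes A B :: "'a set"
  shows "add_subgroup A \<Longrightarrow> add_subgroup B \<Longrightarrow> A \<subset> B \<Longrightarrow> p * card A \<le> card B"
  by (rule prime_mult_card_le_card_add_subgroup[OF prime_p card_UNIV])

lemma add_gen_insert_lcs_2_neq_UNIV: "add_gen (insert x (lcs br 2)) \<noteq> UNIV"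
proof
  assume "add_gen (insert x (lcs br 2)) = UNIV"
  then have "lcs br (Suc 2) = lcs br 2"
    using lcs_3_eq_lcs_2_if_add_gen_insert_eq_UNIV[OF lie_ring] by (simp add: numeral_3_eq_3)
  then show False
    using lcs_Suc_psubset[of 2] n_ge_3 by simp
qed

lemma mult_card_add_gen_insert_lcs_2_le: "p * card (add_gen (insert x (lcs br 2))) \<le> p ^ n"
proof -
  have "add_gen (insert x (lcs br 2)) \<subset> UNIV"
    using add_gen_insert_lcs_2_neq_UNIV by blast
  then show ?thesis
    using mult_card_le_card[OF add_subgroup_add_gen add_subgroup_UNIV] card_UNIV by simp
qed

lemma power2_mult_card_lcs_2_le: "p ^ 2 * card (lcs br 2) \<le> p ^ n"
proof -
  have "lcs br (Suc 1) \<subset> lcs br 1"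
    using n_ge_3 by (intro lcs_Suc_psubset) simp_all
  then obtain x where x: "x \<notin> lcs br 2"
    unfolding Suc_1 by blast
  then have "p * card (lcs br 2) \<le> card (add_gen (insert x (lcs br 2)))"
    using subset_add_gen[of "insert x (lcs br 2)"]
    by (intro mult_card_le_card add_subgroup_lcs add_subgroup_add_gen) auto
  then have "p ^ 2 * card (lcs br 2) \<le> p * card (add_gen (insert x (lcs br 2)))"
    by (simp add: power2_eq_square)
  also have "\<dots> \<le> p ^ n"
    by (rule mult_card_add_gen_insert_lcs_2_le)
  finally show ?thesis .
qed

lemma card_lcs:
  assumes "2 \<le> j" "j \<le> n"
  shows "card (lcs br j) = p ^ (n - j)"
proof (rule antisym)
  have chain: "p * card (lcs br (Suc k)) \<le> card (lcs br k)" if "1 \<le> k" "k < n" for k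
    using lcs_Suc_psubset[OF that] by (intro mult_card_le_card add_subgroup_lcs)
  have "p ^ j = p ^ 2 * p ^ (j - 2)"
    using assms(1) by (metis le_add_diff_inverse power_add)
  then have "p ^ j * card (lcs br j) = p ^ 2 * (p ^ (j - 2) * card (lcs br j))"
    by simp
  also have "\<dots> \<le> p ^ 2 * card (lcs br 2)"
    using assms power_mult_le_of_chain[where f = "\<lambda>k. card (lcs br k)" and a = 2 and b = j] chain by simp
  also have "\<dots> \<le> p ^ n"
    by (rule power2_mult_card_lcs_2_le)
  also have "\<dots> = p ^ (n - j) * p ^ j"
    using assms(2) by (simp add: power_add[symmetric])
  finally show "card (lcs br j) \<le> p ^ (n - j)"
    using prime_gt_0_nat[OF prime_p] by simp
  have "p ^ (n - j) * card (lcs br n) \<le> card (lcs br j)"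
    using assms by (intro power_mult_le_of_chain chain) auto
  then show "p ^ (n - j) \<le> card (lcs br j)"
    by (simp add: lcs_n)
qed

lemma card_lcs_le_mult_card_lcs_Suc: "2 \<le> j \<Longrightarrow> j < n \<Longrightarrow> card (lcs br j) \<le> p * card (lcs br (Suc j))"
  by (simp add: card_lcs Suc_diff_Suc[symmetric])

lemma card_add_gen_insert_lcs_2_le: "card (add_gen (insert x (lcs br 2))) \<le> p * card (lcs br 2)"
proof -
  have "Suc (Suc (n - 2)) = n"
    using n_ge_3 by simp
  then have "p ^ n = p * (p * p ^ (n - 2))"
    by (metis power_Suc)
  also have "\<dots> = p * (p * card (lcs br 2))"
    using card_lcs[of 2] n_ge_3 by simp
  finally have "p * card (add_gen (insert x (lcs br 2))) \<le> p * (p * card (lcs br 2))"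
    using mult_card_add_gen_insert_lcs_2_le by simp
  then show ?thesis
    using prime_gt_0_nat[OF prime_p] by simp
qed

lemma nat_mult_mem_lcs_2: "nat_mult p x \<in> lcs br 2"
proof (rule ccontr)
  let ?M = "add_gen (insert x (lcs br 2))"
  let ?M' = "add_gen (insert (nat_mult p x) (lcs br 2))"
  assume px: "nat_mult p x \<notin> lcs br 2"
  have "x \<in> ?M"
    by (simp add: add_gen.base)
  then have "nat_mult p x \<in> ?M"
    by (rule add_subgroup_nat_mult[OF add_subgroup_add_gen])
  then have "?M' \<subseteq> ?M"
    using subset_add_gen[of "insert x (lcs br 2)"] by (intro add_gen_least add_subgroup_add_gen) auto
  moreover have "lcs br 2 \<subset> ?M'"
    using px subset_add_gen[of "insert (nat_mult p x) (lcs br 2)"] by auto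
  ultimately have "?M' = ?M"
    using card_add_gen_insert_lcs_2_le
    by (intro intermediate_add_subgroup_eq[OF prime_p card_UNIV add_subgroup_lcs add_subgroup_add_gen])
  then have "x \<in> ?M'"
    using \<open>x \<in> ?M\<close> by simp
  moreover have "nat_mult (p ^ n) x \<in> lcs br 2"
    using nat_mult_card_UNIV[of x] card_UNIV add_subgroup_lcs[of br 2] by (simp add: add_subgroup_def)
  ultimately have "x \<in> lcs br 2"
    by (rule mem_if_mem_add_gen_insert_nat_mult[OF add_subgroup_lcs])
  then show False
    using px add_subgroup_nat_mult[OF add_subgroup_lcs] by blast
qed

lemma nat_mult_mem_lcs_Suc:
  assumes i: "2 \<le> i" "Suc i < n" and pL: "\<And>c. nat_mult p c \<in> lcs br i"
  shows "nat_mult p a \<in> lcs br (Suc i)"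
proof (rule ccontr)
  let ?K = "lcs br (Suc (Suc i))"
  assume pa: "nat_mult p a \<notin> lcs br (Suc i)"
  have K: "add_subgroup ?K"
    by (rule add_subgroup_lcs)
  have lcs_Suc_K: "br w c \<in> ?K" if "w \<in> lcs br (Suc i)" for w c
    using bracket_mem_lcs_Suc[OF _ that] by simp
  have P: "add_gen (insert (nat_mult p a) (lcs br (Suc i))) = lcs br i"
  proof (rule intermediate_add_subgroup_eq[OF prime_p card_UNIV add_subgroup_lcs add_subgroup_add_gen])
    show "lcs br (Suc i) \<subset> add_gen (insert (nat_mult p a) (lcs br (Suc i)))"
      using pa subset_add_gen[of "insert (nat_mult p a) (lcs br (Suc i))"] by auto
    show "add_gen (insert (nat_mult p a) (lcs br (Suc i))) \<subseteq> lcs br i"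
      using pL lcs_Suc_subset_lcs[of br i] by (intro add_gen_least add_subgroup_lcs) auto
    show "card (lcs br i) \<le> p * card (lcs br (Suc i))"
      using i by (intro card_lcs_le_mult_card_lcs_Suc) auto
  qed
  have "br a v \<in> ?K" if "v \<in> lcs br i" for v
  proof (rule bracket_mem_add_gen[OF lie_ring K])
    show "a \<in> add_gen {a}"
      by (simp add: add_gen.base)
    show "v \<in> add_gen (insert (nat_mult p a) (lcs br (Suc i)))"
      using that P by simp
    show "br u w \<in> ?K" if "u \<in> {a}" "w \<in> insert (nat_mult p a) (lcs br (Suc i))" for u w
      using that(2)
    proof
      assume "w = nat_mult p a"
      then show ?thesis
        using that(1) K
        by (simp add: bracket_nat_mult_right[OF lie_ring] bracket_self[OF lie_ring]
            additive.zero[OF additive_nat_mult] add_subgroup_def)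
    next
      assume "w \<in> lcs br (Suc i)"
      then show ?thesis
        using that(1) lcs_Suc_K[of w u] K bracket_antisym[OF lie_ring, of u w]
        by (simp add: add_subgroup_def)
    qed
  qed
  then have pa_K: "br (nat_mult p a) c \<in> ?K" for c
    using pL[of c]
    by (simp add: bracket_nat_mult_left[OF lie_ring] bracket_nat_mult_right[OF lie_ring, symmetric])
  have "br u c \<in> ?K" if "u \<in> lcs br i" for u c
  proof (rule bracket_mem_add_gen[OF lie_ring K])
    show "u \<in> add_gen (insert (nat_mult p a) (lcs br (Suc i)))"
      using that P by simp
    show "c \<in> add_gen UNIV"
      by (simp add: add_gen.base)
    show "br w d \<in> ?K" if "w \<in> insert (nat_mult p a) (lcs br (Suc i))" for w d
      using that pa_K lcs_Suc_K by auto
  qed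
  then have "lcs br (Suc i) \<subseteq> ?K"
    using i by (intro lcs_Suc_subset K) auto
  then show False
    using lcs_Suc_psubset[of "Suc i"] i by auto
qed

lemma nat_mult_mem_lcs: "2 \<le> i \<Longrightarrow> i < n \<Longrightarrow> nat_mult p a \<in> lcs br i"
proof (induction i arbitrary: a rule: dec_induct)
  case base
  show ?case by (rule nat_mult_mem_lcs_2)
next
  case (step i)
  then show ?case
    by (intro nat_mult_mem_lcs_Suc) auto
qed

end

theorem lemma2:
  fixes br :: "'a::{ab_group_add, finite} \<Rightarrow> 'a \<Rightarrow> 'a"
    and p n :: nat
  assumes "prime p"
    and "n \<ge> 3"
    and "lie_ring br"
    and "card (UNIV :: 'a set) = p ^ n"
    and "nilpotency_class br (n - 1)"
  shows "{nat_mult p a | a. a \<in> (UNIV :: 'a set)} \<subseteq> lcs br (n - 1)"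
proof -
  interpret maximal_class_lie_ring br p n
    using assms by unfold_locales
  show ?thesis
    using assms(2) nat_mult_mem_lcs[of "n - 1"] by auto
qed

end
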